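(* Let $N,M\ge 1$, let $(a_\ell[i])_{i=0}^{N-1}$, $(b_\ell[i])_{i=0}^{N-1}$ for $\ell=1,\dots,M$, and $(c[i])_{i=0}^{N-1}$ be sequences of nonnegative integers, and let $W$ be the maximum of all their entries. Build an undirected graph consisting of three paths $u_0-u_1-\cdots-u_{N-1}$, $v_0-v_1-\cdots-v_{N-1}$, $w_0-w_1-\cdots-w_{N-1}$ whose edges all have weight $0$, plus nodes $x_1,\dots,x_M$, and the following additional edges: for every $i\in\{0,\dots,N-1\}$ and $\ell\in\{1,\dots,M\}$, an edge $\{u_i,x_\ell\}$ of weight $5W-a_\ell[i]$; for every $j\in\{0,\dots,N-1\}$ and $\ell$, an edge $\{x_\ell,v_j\}$ of weight $5W-b_\ell[j]$; and for every $k\in\{0,\dots,N-1\}$, an edge $\{v_0,w_k\}$ of weight $5W+c[k]$. Then the minimum total weight of a $u_0$-$w_{N-1}$ path in this graph using at most $N+2$ edges is strictly less than $15W$ if and only if there exist $i,j,k\in\{0,\dots,N-1\}$ and $\ell\in\{1,\dots,M\}$ with $i+j\le k$ and $c[k]<a_\ell[i]+b_\ell[j]$.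
   Context: The weight of a path is the sum of its edge weights; the number of edges it uses is its number of hops. *)

theory Defs
  imports Main
begin

datatype vtx = U nat | V nat | Wv nat | X nat

definition maxW :: "nat \<Rightarrow> nat \<Rightarrow> (nat \<Rightarrow> nat \<Rightarrow> nat) \<Rightarrow> (nat \<Rightarrow> nat \<Rightarrow> nat) \<Rightarrow> (nat \<Rightarrow> nat) \<Rightarrow> nat" where
  "maxW N M a b c = Max ({a l i | l i. l \<in> {1..M} \<and> i < N} \<union> {b l i | l i. l \<in> {1..M} \<and> i < N} \<union> {c i | i. i < N})"

text \<open>The weighted edges of the undirected graph, each listed once as (endpoint, endpoint, weight).\<close>
definition edges :: "nat \<Rightarrow> nat \<Rightarrow> (nat \<Rightarrow> nat \<Rightarrow> nat) \<Rightarrow> (nat \<Rightarrow> nat \<Rightarrow> nat) \<Rightarrow> (nat \<Rightarrow> nat) \<Rightarrow> (vtx \<times> vtx \<times> int) set" where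
  "edges N M a b c =
    (let W = int (maxW N M a b c) in
       {(U i, U (i+1), 0) | i. i + 1 < N}
     \<union> {(V i, V (i+1), 0) | i. i + 1 < N}
     \<union> {(Wv i, Wv (i+1), 0) | i. i + 1 < N}
     \<union> {(U i, X l, 5 * W - int (a l i)) | i l. i < N \<and> l \<in> {1..M}}
     \<union> {(X l, V j, 5 * W - int (b l j)) | j l. j < N \<and> l \<in> {1..M}}
     \<union> {(V 0, Wv k, 5 * W + int (c k)) | k. k < N})"

definition is_path :: "(vtx \<times> vtx \<times> int) set \<Rightarrow> vtx \<Rightarrow> vtx \<Rightarrow> vtx list \<Rightarrow> int list \<Rightarrow> bool" where
  "is_path E s t vs ws \<longleftrightarrow>
     vs \<noteq> [] \<and> hd vs = s \<and> last vs = t \<and> distinct vs \<and> length ws + 1 = length vs \<and>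
     (\<forall>i < length ws. (vs ! i, vs ! (i+1), ws ! i) \<in> E \<or> (vs ! (i+1), vs ! i, ws ! i) \<in> E)"

definition hop_dist :: "(vtx \<times> vtx \<times> int) set \<Rightarrow> nat \<Rightarrow> vtx \<Rightarrow> vtx \<Rightarrow> int" where
  "hop_dist E h s t = Min {sum_list ws | vs ws. is_path E s t vs ws \<and> length ws \<le> h}"

end

theory Submission
  imports Defs
begin

text \<open>Every edge at a node x_l weighs at least 4W, and the only way onto the w-path is an edge from
  v_0 of weight 5W + c[k]. A path of weight below 15W therefore visits exactly one x_l (two visits
  would already cost 16W), so it has the shape u_0 .. u_i, x_l, v_j .. v_0, w_k .. w_{N-1}: its weight
  is 15W - a_l[i] - b_l[j] + c[k], and since indices move by at most one along the zero-weight paths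
  it has at least i + j + 3 + (N - 1 - k) edges, which is at most N + 2 exactly when i + j \<le> k.
  Conversely, this path realises every such quadruple.\<close>

definition edge_between :: "(vtx \<times> vtx \<times> int) set \<Rightarrow> vtx \<Rightarrow> vtx \<Rightarrow> int \<Rightarrow> bool" where
  "edge_between E x y w \<longleftrightarrow> (x, y, w) \<in> E \<or> (y, x, w) \<in> E"

lemma is_path_of_fun:
  assumes "inj_on f {0..n}" "f 0 = s" "f n = t"
    and "\<And>i. i < n \<Longrightarrow> edge_between E (f i) (f (Suc i)) (g i)"
  shows "is_path E s t (map f [0..<Suc n]) (map g [0..<n])"
  using assms unfolding is_path_def edge_between_def
  by (auto simp: distinct_map hd_map last_map atLeastAtMost_upt simp del: upt_Suc)

lemma finite_path_weights:
  assumes "finite E"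
  shows "finite {sum_list ws | vs ws. is_path E s t vs ws \<and> length ws \<le> h}"
proof (rule finite_subset)
  let ?ws = "{ws. set ws \<subseteq> (\<lambda>(x, y, w). w) ` E \<and> length ws \<le> h}"
  show "{sum_list ws | vs ws. is_path E s t vs ws \<and> length ws \<le> h} \<subseteq> sum_list ` ?ws"
    unfolding is_path_def by (force simp: in_set_conv_nth)
  show "finite (sum_list ` ?ws)"
    using assms by (intro finite_imageI finite_lists_length_le) auto
qed

lemma hop_dist_less_iff:
  assumes "finite E" and "is_path E s t vs0 ws0" "length ws0 \<le> h"
  shows "hop_dist E h s t < r \<longleftrightarrow> (\<exists>vs ws. is_path E s t vs ws \<and> length ws \<le> h \<and> sum_list ws < r)"
proof -
  let ?S = "{sum_list ws | vs ws. is_path E s t vs ws \<and> length ws \<le> h}"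
  have "finite ?S" "?S \<noteq> {}"
    using finite_path_weights[OF assms(1)] assms(2,3) by blast+
  then have "Min ?S < r \<longleftrightarrow> (\<exists>x\<in>?S. x < r)"
    by (rule Min_less_iff)
  then show ?thesis
    unfolding hop_dist_def by blast
qed

datatype layer = LU | LX | LV | LW

fun layer_of :: "vtx \<Rightarrow> layer" where
  "layer_of (U _) = LU" | "layer_of (X _) = LX" | "layer_of (V _) = LV" | "layer_of (Wv _) = LW"

fun index :: "vtx \<Rightarrow> nat" where
  "index (U i) = i" | "index (X l) = l" | "index (V j) = j" | "index (Wv k) = k"

lemma vtx_of_layer:
  "layer_of x = LU \<Longrightarrow> x = U (index x)" "layer_of x = LX \<Longrightarrow> x = X (index x)"
  "layer_of x = LV \<Longrightarrow> x = V (index x)" "layer_of x = LW \<Longrightarrow> x = Wv (index x)"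
  by (cases x; simp)+

locale reduction_graph =
  fixes N M :: nat and a b :: "nat \<Rightarrow> nat \<Rightarrow> nat" and c :: "nat \<Rightarrow> nat"
begin

abbreviation "E \<equiv> edges N M a b c"
abbreviation "W \<equiv> int (maxW N M a b c)"

lemma entries_le_maxW:
  assumes "l \<in> {1..M}" "i < N"
  shows "a l i \<le> maxW N M a b c" "b l i \<le> maxW N M a b c" "c i \<le> maxW N M a b c"
proof -
  have "finite {a l i | l i. l \<in> {1..M} \<and> i < N}" "finite {b l i | l i. l \<in> {1..M} \<and> i < N}"
    "finite {c i | i. i < N}"
    by (rule finite_image_set2 finite_image_set; simp)+
  then show "a l i \<le> maxW N M a b c" "b l i \<le> maxW N M a b c" "c i \<le> maxW N M a b c"
    unfolding maxW_def using assms by (intro Max_ge; blast)+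
qed

lemma finite_edges: "finite E"
  unfolding edges_def Let_def
  by (intro finite_UnI finite_image_set finite_image_set2; auto intro: finite_subset[of _ "{..<N}"])

lemma edge_weight_nonneg: "edge_between E x y w \<Longrightarrow> 0 \<le> w"
  using entries_le_maxW unfolding edge_between_def edges_def Let_def by fastforce

lemma X_edge_weight:
  "edge_between E x y w \<Longrightarrow> layer_of x = LX \<or> layer_of y = LX \<Longrightarrow> 4 * W \<le> w"
  using entries_le_maxW unfolding edge_between_def edges_def Let_def by fastforce

lemma no_X_X_edge: "\<not> edge_between E (X l) (X l') w"
  unfolding edge_between_def edges_def Let_def by auto

lemma edge_U_X:
  "edge_between E (U i) (X l) w \<Longrightarrow> i < N \<and> l \<in> {1..M} \<and> w = 5 * W - int (a l i)"
  unfolding edge_between_def edges_def Let_def by auto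

lemma edge_X_V:
  "edge_between E (X l) (V j) w \<Longrightarrow> j < N \<and> l \<in> {1..M} \<and> w = 5 * W - int (b l j)"
  unfolding edge_between_def edges_def Let_def by auto

lemma edge_into_Wv:
  "edge_between E x (Wv k) w \<Longrightarrow> layer_of x \<noteq> LW \<Longrightarrow> x = V 0 \<and> k < N \<and> w = 5 * W + int (c k)"
  unfolding edge_between_def edges_def Let_def by auto

lemma edge_within_layer:
  assumes "edge_between E x y w" "layer_of x \<noteq> LX" "layer_of y \<noteq> LX"
    and "(layer_of x \<noteq> LW \<and> layer_of y \<noteq> LW) \<or> (x \<noteq> V 0 \<and> y \<noteq> V 0)"
  shows "layer_of y = layer_of x \<and> index y \<le> index x + 1 \<and> index x \<le> index y + 1"
  using assms unfolding edge_between_def edges_def Let_def by auto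

lemma path_through_quadruple:
  assumes "i < N" "j < N" "k < N" "l \<in> {1..M}" "i + j \<le> k"
  obtains vs ws where "is_path E (U 0) (Wv (N - 1)) vs ws" "length ws \<le> N + 2"
    "sum_list ws = 15 * W - int (a l i) - int (b l j) + int (c k)"
proof -
  define n where "n = i + j + 3 + (N - 1 - k)"
  define f where "f t = (if t \<le> i then U t else if t = i + 1 then X l
    else if t \<le> i + 2 + j then V (i + 2 + j - t) else Wv (t - (i + 3 + j) + k))" for t
  define g where "g t = (if t = i then 5 * W - int (a l i) else if t = i + 1 then 5 * W - int (b l j)
    else if t = i + 2 + j then 5 * W + int (c k) else 0)" for t
  have "inj_on f {0..n}"
    unfolding inj_on_def f_def by (auto split: if_splits)
  moreover have "f n = Wv (N - 1)"
    unfolding f_def n_def using assms by auto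
  moreover have "edge_between E (f t) (f (Suc t)) (g t)" if "t < n" for t
    using assms that unfolding n_def f_def g_def edge_between_def edges_def Let_def
    by (cases "t < i"; cases "t = i"; cases "t = i + 1"; cases "t < i + 2 + j"; cases "t = i + 2 + j")
      (auto simp: Suc_diff_Suc)
  ultimately have "is_path E (U 0) (Wv (N - 1)) (map f [0..<Suc n]) (map g [0..<n])"
    by (intro is_path_of_fun) (auto simp: f_def)
  moreover have "sum_list (map g [0..<n]) = 15 * W - int (a l i) - int (b l j) + int (c k)"
    by (simp add: sum_list_distinct_conv_sum_set g_def sum.If_cases n_def)
  ultimately show thesis
    using that assms(3,5) n_def by simp
qed

end

locale cheap_path = reduction_graph +
  fixes vs :: "vtx list" and ws :: "int list"
  assumes path: "is_path E (U 0) (Wv (N - 1)) vs ws"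
    and cheap: "sum_list ws < 15 * W"
begin

abbreviation "n \<equiv> length ws"

lemma length_vertices: "length vs = Suc n"
  using path by (simp add: is_path_def)

lemma first_vertex: "vs ! 0 = U 0"
  using path by (auto simp: is_path_def hd_conv_nth)

lemma last_vertex: "vs ! n = Wv (N - 1)"
  using path length_vertices last_conv_nth[of vs] by (auto simp: is_path_def)

lemma step_edge: "t < n \<Longrightarrow> edge_between E (vs ! t) (vs ! Suc t) (ws ! t)"
  using path by (simp add: is_path_def edge_between_def)

lemma vertex_position_unique: "vs ! t = vs ! t' \<Longrightarrow> t \<le> n \<Longrightarrow> t' \<le> n \<Longrightarrow> t = t'"
  using path length_vertices by (simp add: is_path_def nth_eq_iff_index_eq)

lemma partial_weight_le: "T \<subseteq> {..<n} \<Longrightarrow> (\<Sum>t\<in>T. ws ! t) \<le> sum_list ws"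
  unfolding sum_list_sum_nth
  by (rule sum_mono2) (auto intro: edge_weight_nonneg step_edge)

lemma X_unique:
  assumes "layer_of (vs ! p) = LX" "layer_of (vs ! p') = LX" "p \<le> n" "p' \<le> n"
  shows "p = p'"
proof -
  have False if X: "layer_of (vs ! p) = LX" "layer_of (vs ! p') = LX" and "p < p'" "p' \<le> n" for p p'
  proof -
    have "0 < p" "p' < n"
      using X first_vertex last_vertex \<open>p < p'\<close> \<open>p' \<le> n\<close> by (auto intro!: Nat.gr0I le_neq_implies_less)
    have "p' \<noteq> Suc p"
    proof
      assume "p' = Suc p"
      then have "edge_between E (X (index (vs ! p))) (X (index (vs ! p'))) (ws ! p)"
        using step_edge[of p] vtx_of_layer(2) X \<open>p < p'\<close> \<open>p' < n\<close> by (metis order.strict_trans)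
      then show False
        by (simp add: no_X_X_edge)
    qed
    have heavy: "4 * W \<le> ws ! t" if "t \<in> {p - 1, p, p' - 1, p'}" for t
      using that X \<open>0 < p\<close> \<open>p < p'\<close> \<open>p' < n\<close>
      by (auto intro!: X_edge_weight[OF step_edge])
    have "ws ! (p - 1) + ws ! p + ws ! (p' - 1) + ws ! p' = (\<Sum>t\<in>{p - 1, p, p' - 1, p'}. ws ! t)"
      using \<open>0 < p\<close> \<open>p < p'\<close> \<open>p' \<noteq> Suc p\<close> by (cases p; cases p') (auto simp: add.assoc)
    also have "\<dots> \<le> sum_list ws"
      using \<open>p < p'\<close> \<open>p' < n\<close> by (intro partial_weight_le) auto
    finally have "ws ! (p - 1) + ws ! p + ws ! (p' - 1) + ws ! p' \<le> sum_list ws" .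
    moreover have "4 * W \<le> ws ! (p - 1)" "4 * W \<le> ws ! p" "4 * W \<le> ws ! (p' - 1)" "4 * W \<le> ws ! p'"
      by (simp_all add: heavy)
    ultimately show False
      using cheap by linarith
  qed
  then show ?thesis
    using assms by (metis linorder_neqE_nat)
qed

text \<open>Away from the nodes x_l, the only edges between different layers join v_0 to the w-path.\<close>

lemma segment:
  assumes "m \<le> m'" "m' \<le> n"
    and no_X: "\<forall>t\<in>{m..m'}. layer_of (vs ! t) \<noteq> LX"
    and no_c_edge: "(\<forall>t\<in>{m..m'}. layer_of (vs ! t) \<noteq> LW) \<or> (\<forall>t\<in>{m..m'}. vs ! t \<noteq> V 0)"
  shows "layer_of (vs ! m') = layer_of (vs ! m) \<and>
    index (vs ! m') \<le> index (vs ! m) + (m' - m) \<and> index (vs ! m) \<le> index (vs ! m') + (m' - m)"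
  using assms(1)
proof (induction m' rule: dec_induct)
  case base
  then show ?case by simp
next
  case (step t)
  have "edge_between E (vs ! t) (vs ! Suc t) (ws ! t)"
    using step.hyps assms(2) by (intro step_edge) simp
  then have "layer_of (vs ! Suc t) = layer_of (vs ! t) \<and>
      index (vs ! Suc t) \<le> index (vs ! t) + 1 \<and> index (vs ! t) \<le> index (vs ! Suc t) + 1"
    using step.hyps no_X no_c_edge by (intro edge_within_layer) auto
  with step.IH step.hyps show ?case by auto
qed

lemma first_Wv:
  obtains q k where "0 < q" "q \<le> n" "\<forall>t<q. layer_of (vs ! t) \<noteq> LW" "vs ! q = Wv k"
    "vs ! (q - 1) = V 0"
proof -
  define q where "q = (LEAST t. layer_of (vs ! t) = LW)"
  have "layer_of (vs ! q) = LW" "q \<le> n" "\<forall>t<q. layer_of (vs ! t) \<noteq> LW"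
    unfolding q_def using last_vertex by (auto intro: LeastI[of _ n] Least_le dest: not_less_Least)
  moreover have "0 < q"
    using calculation first_vertex by (auto intro: Nat.gr0I)
  moreover have "edge_between E (vs ! (q - 1)) (Wv (index (vs ! q))) (ws ! (q - 1))"
    using calculation step_edge[of "q - 1"] vtx_of_layer(4) by simp
  moreover have "layer_of (vs ! (q - 1)) \<noteq> LW"
    using calculation by simp
  ultimately show thesis
    using that[of q "index (vs ! q)"] edge_into_Wv vtx_of_layer(4) by blast
qed

lemma path_shape:
  obtains p q i j l k where "0 < p" "p < q - 1" "q \<le> n"
    "vs ! (p - 1) = U i" "vs ! p = X l" "vs ! Suc p = V j" "vs ! (q - 1) = V 0" "vs ! q = Wv k"
    "i \<le> p - 1" "j \<le> q - 1 - (p + 1)" "N - 1 \<le> k + (n - q)"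
proof -
  obtain q k where q: "0 < q" "q \<le> n" "\<forall>t<q. layer_of (vs ! t) \<noteq> LW" "vs ! q = Wv k"
    "vs ! (q - 1) = V 0"
    by (rule first_Wv)
  obtain p where p: "p \<le> q - 1" "layer_of (vs ! p) = LX"
  proof -
    have "layer_of (vs ! (q - 1)) \<noteq> layer_of (vs ! 0)"
      using q(5) first_vertex by simp
    then have "\<exists>p\<in>{0..q - 1}. layer_of (vs ! p) = LX"
      using segment[of 0 "q - 1"] q(1-3) by fastforce
    then show thesis
      using that by auto
  qed
  have "0 < p" "p < q - 1"
    using p q(5) first_vertex by (auto intro: Nat.gr0I le_neq_implies_less)
  have no_X: "layer_of (vs ! t) \<noteq> LX" if "t \<le> n" "t \<noteq> p" for t
    using X_unique[of t p] p that q(2) by force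
  have U_part: "layer_of (vs ! (p - 1)) = LU \<and> index (vs ! (p - 1)) \<le> p - 1"
    using segment[of 0 "p - 1"] no_X q(2,3) first_vertex \<open>0 < p\<close> \<open>p < q - 1\<close> by auto
  have V_part: "layer_of (vs ! (p + 1)) = LV \<and> index (vs ! (p + 1)) \<le> q - 1 - (p + 1)"
  proof -
    have "\<forall>t\<in>{p + 1..q - 1}. layer_of (vs ! t) \<noteq> LW"
      using q(1,3) by auto
    then show ?thesis
      using segment[of "p + 1" "q - 1"] no_X q(2,5) \<open>p < q - 1\<close> by auto
  qed
  have W_part: "N - 1 \<le> k + (n - q)"
  proof -
    have "\<forall>t\<in>{q..n}. vs ! t \<noteq> V 0"
      using vertex_position_unique[of _ "q - 1"] q(1,2,5) by fastforce
    moreover have "\<forall>t\<in>{q..n}. layer_of (vs ! t) \<noteq> LX"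
      using no_X \<open>p < q - 1\<close> by auto
    ultimately show ?thesis
      using segment[of q n] q(2,4) last_vertex by simp
  qed
  define i j l where "i = index (vs ! (p - 1))" and "j = index (vs ! (p + 1))" and "l = index (vs ! p)"
  have "vs ! (p - 1) = U i" "vs ! p = X l" "vs ! Suc p = V j"
    using U_part V_part p(2) vtx_of_layer(1-3) unfolding i_def j_def l_def Suc_eq_plus1 by blast+
  moreover have "i \<le> p - 1" "j \<le> q - 1 - (p + 1)"
    using U_part V_part unfolding i_def j_def by blast+
  ultimately show thesis
    using that W_part q(2,4,5) \<open>0 < p\<close> \<open>p < q - 1\<close> by blast
qed

lemma certificate:
  obtains i j k l where "i < N" "j < N" "k < N" "l \<in> {1..M}"
    "i + j + 3 + (N - 1) \<le> n + k" "c k < a l i + b l j"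
proof -
  obtain p q i j l k where shape: "0 < p" "p < q - 1" "q \<le> n"
    "vs ! (p - 1) = U i" "vs ! p = X l" "vs ! Suc p = V j" "vs ! (q - 1) = V 0" "vs ! q = Wv k"
    "i \<le> p - 1" "j \<le> q - 1 - (p + 1)" "N - 1 \<le> k + (n - q)"
    by (rule path_shape)
  have "edge_between E (U i) (X l) (ws ! (p - 1))"
    using step_edge[of "p - 1"] shape(1-5) by simp
  moreover have "edge_between E (X l) (V j) (ws ! p)"
    using step_edge[of p] shape(2,3,5,6) by simp
  moreover have "edge_between E (V 0) (Wv k) (ws ! (q - 1))"
    using step_edge[of "q - 1"] shape(2,3,7,8) by simp
  ultimately have weights: "i < N \<and> l \<in> {1..M} \<and> ws ! (p - 1) = 5 * W - int (a l i)"
    "j < N \<and> ws ! p = 5 * W - int (b l j)" "k < N \<and> ws ! (q - 1) = 5 * W + int (c k)"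
    by (auto dest: edge_U_X edge_X_V edge_into_Wv)
  have "ws ! (p - 1) + ws ! p + ws ! (q - 1) = (\<Sum>t\<in>{p - 1, p, q - 1}. ws ! t)"
    using shape(1,2) by (cases p) (auto simp: add.assoc)
  also have "\<dots> \<le> sum_list ws"
    using shape(2,3) by (intro partial_weight_le) auto
  finally have "c k < a l i + b l j"
    using weights cheap by linarith
  moreover have "i + j + 3 + (N - 1) \<le> n + k"
    using shape by linarith
  ultimately show thesis
    using that weights by blast
qed

end

theorem mainTheorem8:
  fixes N M :: nat and a b :: "nat \<Rightarrow> nat \<Rightarrow> nat" and c :: "nat \<Rightarrow> nat"
  assumes "N \<ge> 1" and "M \<ge> 1"
  shows "hop_dist (edges N M a b c) (N + 2) (U 0) (Wv (N - 1)) < 15 * int (maxW N M a b c)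
     \<longleftrightarrow> (\<exists>i j k l. i < N \<and> j < N \<and> k < N \<and> l \<in> {1..M} \<and> i + j \<le> k \<and> c k < a l i + b l j)"
proof -
  interpret reduction_graph N M a b c .
  obtain vs0 ws0 where "is_path E (U 0) (Wv (N - 1)) vs0 ws0" "length ws0 \<le> N + 2"
    by (rule path_through_quadruple[of 0 0 "N - 1" 1]) (use assms in auto)
  note hop_dist_iff = hop_dist_less_iff[OF finite_edges this]
  show ?thesis
  proof
    assume "hop_dist E (N + 2) (U 0) (Wv (N - 1)) < 15 * W"
    then obtain vs ws where "is_path E (U 0) (Wv (N - 1)) vs ws" "length ws \<le> N + 2"
      "sum_list ws < 15 * W"
      using hop_dist_iff by blast
    then interpret cheap_path N M a b c vs ws
      by unfold_locales
    obtain i j k l where "i < N" "j < N" "k < N" "l \<in> {1..M}"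
      "i + j + 3 + (N - 1) \<le> length ws + k" "c k < a l i + b l j"
      by (rule certificate)
    moreover from this \<open>length ws \<le> N + 2\<close> assms(1) have "i + j \<le> k"
      by linarith
    ultimately show "\<exists>i j k l. i < N \<and> j < N \<and> k < N \<and> l \<in> {1..M} \<and> i + j \<le> k \<and> c k < a l i + b l j"
      by blast
  next
    assume "\<exists>i j k l. i < N \<and> j < N \<and> k < N \<and> l \<in> {1..M} \<and> i + j \<le> k \<and> c k < a l i + b l j"
    then obtain i j k l where ijkl: "i < N" "j < N" "k < N" "l \<in> {1..M}" "i + j \<le> k"
      and "c k < a l i + b l j"
      by blast
    moreover obtain vs ws where "is_path E (U 0) (Wv (N - 1)) vs ws" "length ws \<le> N + 2"
      "sum_list ws = 15 * W - int (a l i) - int (b l j) + int (c k)"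
      by (rule path_through_quadruple[OF ijkl])
    ultimately show "hop_dist E (N + 2) (U 0) (Wv (N - 1)) < 15 * W"
      using hop_dist_iff by force
  qed
qed

end
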